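(* Fix $\alpha\in(0,1)$. Every $\alpha$-power piecewise linear function $g:\mathbb{R}\to\mathbb{R}$ is exactly representable by a width-one leaky-ReLU network: there exist $L\in\mathbb{N}$ and parameters $w_i,b_i\in\mathbb{R}$ such that the corresponding $f_L\in\mathcal{N}_1(L)$ satisfies $g(x)=f_L(x)$ for all $x\in\mathbb{R}$.
   Context: Leaky-ReLU: $\sigma_\alpha(x)=\max(\alpha x,x)$. $\mathcal{N}_1(L)$ is the set of functions $f_L:\mathbb{R}\to\mathbb{R}$ with $f_0(x)=w_0x+b_0$, $f_k(x)=w_k\sigma_\alpha(f_{k-1}(x))+b_k$ ($k=1,\dots,L$), $w_k,b_k\in\mathbb{R}$. A piecewise linear (PL) function is a continuous function $g:\mathbb{R}\to\mathbb{R}$ which is affine on each of finitely many intervals partitioning $\mathbb{R}$ (separated by finitely many breakpoints). A PL function $g$ is called $\alpha$-power PL if there is a constant $c\in\mathbb{R}$ such that the slope of every linear piece of $g$ lies in $\{c\alpha^k: k\in\mathbb{Z}\}$. *)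

theory Defs
  imports "HOL-Analysis.Analysis"
begin

definition leaky_relu :: "real \<Rightarrow> real \<Rightarrow> real" where
  "leaky_relu \<alpha> x = max (\<alpha> * x) x"

text \<open>Width-one leaky-ReLU network. The parameter list ps = [(w_0,b_0),...,(w_L,b_L)]
  (so length ps = L+1). f_0 x = w_0 x + b_0, f_k x = w_k sigma(f_(k-1) x) + b_k.\<close>
fun net_aux :: "real \<Rightarrow> (real \<times> real) list \<Rightarrow> real \<Rightarrow> real" where
  "net_aux \<alpha> [] y = y"
| "net_aux \<alpha> ((w, b) # ps) y = net_aux \<alpha> ps (w * leaky_relu \<alpha> y + b)"

fun net :: "real \<Rightarrow> (real \<times> real) list \<Rightarrow> real \<Rightarrow> real" where
  "net \<alpha> [] x = x"
| "net \<alpha> ((w0, b0) # ps) x = net_aux \<alpha> ps (w0 * x + b0)"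

definition N1 :: "real \<Rightarrow> nat \<Rightarrow> (real \<Rightarrow> real) set" where
  "N1 \<alpha> L = {net \<alpha> ps | ps. length ps = L + 1}"

definition piece :: "real list \<Rightarrow> nat \<Rightarrow> real set" where
  "piece xs i =
     (if xs = [] then UNIV
      else if i = 0 then {.. xs ! 0}
      else if i = length xs then {xs ! (i - 1) ..}
      else {xs ! (i - 1) .. xs ! i})"

definition pl_with :: "(real \<Rightarrow> real) \<Rightarrow> real list \<Rightarrow> real list \<Rightarrow> real list \<Rightarrow> bool" where
  "pl_with g xs ms bs \<longleftrightarrow>
     sorted_wrt (<) xs \<and> length ms = length xs + 1 \<and> length bs = length xs + 1 \<and>
     (\<forall>i \<le> length xs. \<forall>x \<in> piece xs i. g x = ms ! i * x + bs ! i)"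

definition piecewise_linear :: "(real \<Rightarrow> real) \<Rightarrow> bool" where
  "piecewise_linear g \<longleftrightarrow> continuous_on UNIV g \<and> (\<exists>xs ms bs. pl_with g xs ms bs)"

definition alpha_power_pl :: "real \<Rightarrow> (real \<Rightarrow> real) \<Rightarrow> bool" where
  "alpha_power_pl \<alpha> g \<longleftrightarrow> continuous_on UNIV g \<and>
     (\<exists>xs ms bs c. pl_with g xs ms bs \<and> (\<forall>m \<in> set ms. \<exists>k::int. m = c * \<alpha> powi k))"

end

theory Submission
  imports Defs
begin

text \<open>Write \<open>kink k\<close> for the function with slope 1 on \<open>[0,\<infinity>)\<close> and slope \<open>k\<close> on
  \<open>(-\<infinity>,0]\<close>; then \<open>\<sigma>\<^sub>\<alpha> = kink \<alpha>\<close>, and \<open>kink k \<circ> kink k' = kink (k * k')\<close> for \<open>k' > 0\<close>.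
  Composing \<open>\<sigma>\<^sub>\<alpha>\<close> and its reflection \<open>t \<mapsto> -\<sigma>\<^sub>\<alpha>(-t)/\<alpha> = kink (1/\<alpha>) t\<close>, a width-one
  network realises \<open>kink (\<alpha>\<^sup>d)\<close> for every integer \<open>d\<close>.
  Now induct on the number of breakpoints of \<open>g\<close>, assuming (after negating \<open>g\<close>) that all
  slopes lie in \<open>c \<alpha>\<^sup>\<int>\<close> with \<open>c \<ge> 0\<close>, so that \<open>g\<close> is monotone. If \<open>p\<close> is the leftmost
  breakpoint and \<open>h\<close> continues the second piece of \<open>g\<close> to the left of \<open>p\<close>, then \<open>h\<close> has one
  breakpoint less and \<open>g x = g p + kink (m\<^sub>0/m\<^sub>1) (h x - g p)\<close>, where \<open>m\<^sub>0/m\<^sub>1\<close> is a power of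
  \<open>\<alpha>\<close>: monotonicity of \<open>h\<close> makes the kink act exactly on the points left of \<open>p\<close>.\<close>

inductive net_realizable :: "real \<Rightarrow> (real \<Rightarrow> real) \<Rightarrow> bool" for \<alpha> where
  affine: "net_realizable \<alpha> (\<lambda>x. w * x + b)"
| layer: "net_realizable \<alpha> f \<Longrightarrow> net_realizable \<alpha> (\<lambda>x. w * leaky_relu \<alpha> (f x) + b)"

lemma net_aux_snoc:
  "net_aux \<alpha> (ps @ [(w, b)]) y = w * leaky_relu \<alpha> (net_aux \<alpha> ps y) + b"
  by (induction \<alpha> ps y rule: net_aux.induct) auto

lemma net_snoc:
  "ps \<noteq> [] \<Longrightarrow> net \<alpha> (ps @ [(w, b)]) x = w * leaky_relu \<alpha> (net \<alpha> ps x) + b"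
  by (cases "(\<alpha>, ps, x)" rule: net.cases) (auto simp: net_aux_snoc)

lemma net_in_N1: "ps \<noteq> [] \<Longrightarrow> net \<alpha> ps \<in> N1 \<alpha> (length ps - 1)"
  unfolding N1_def by auto

lemma net_realizable_imp_net:
  assumes "net_realizable \<alpha> f"
  shows "\<exists>ps. ps \<noteq> [] \<and> f = net \<alpha> ps"
  using assms
proof (induction rule: net_realizable.induct)
  case (affine w b)
  have "(\<lambda>x. w * x + b) = net \<alpha> [(w, b)]" by (simp add: fun_eq_iff)
  then show ?case by blast
next
  case (layer f w b)
  then obtain ps where "ps \<noteq> []" "f = net \<alpha> ps" by blast
  then have "(\<lambda>x. w * leaky_relu \<alpha> (f x) + b) = net \<alpha> (ps @ [(w, b)])"
    by (simp add: fun_eq_iff net_snoc)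
  then show ?case by blast
qed

lemma net_realizable_affine_comp:
  assumes "net_realizable \<alpha> f"
  shows "net_realizable \<alpha> (\<lambda>x. a * f x + c)"
  using assms
proof (induction rule: net_realizable.induct)
  case (affine w b)
  have eq: "(\<lambda>x. a * (w * x + b) + c) = (\<lambda>x. (a * w) * x + (a * b + c))"
    by (simp add: fun_eq_iff distrib_left)
  show ?case
    unfolding eq by (rule net_realizable.affine)
next
  case (layer f w b)
  have eq: "(\<lambda>x. a * (w * leaky_relu \<alpha> (f x) + b) + c)
      = (\<lambda>x. (a * w) * leaky_relu \<alpha> (f x) + (a * b + c))"
    by (simp add: fun_eq_iff distrib_left)
  show ?case
    unfolding eq by (rule net_realizable.layer[OF layer.hyps])
qed

lemma net_realizable_comp:
  assumes "net_realizable \<alpha> h" "net_realizable \<alpha> f"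
  shows "net_realizable \<alpha> (\<lambda>x. h (f x))"
  using assms
proof (induction rule: net_realizable.induct)
  case (affine w b)
  then show ?case by (rule net_realizable_affine_comp)
next
  case (layer h w b)
  from layer.IH[OF layer.prems] show ?case by (rule net_realizable.layer)
qed

definition kink :: "real \<Rightarrow> real \<Rightarrow> real" where
  "kink k t = (if 0 \<le> t then t else k * t)"

lemma kink_1 [simp]: "kink 1 = (\<lambda>t. t)"
  by (auto simp: kink_def)

lemma leaky_relu_eq_kink:
  assumes "\<alpha> \<le> 1"
  shows "leaky_relu \<alpha> = kink \<alpha>"
proof
  fix t
  show "leaky_relu \<alpha> t = kink \<alpha> t"
  proof (cases "0 \<le> t")
    case True
    with assms have "0 \<le> (1 - \<alpha>) * t" by simp
    then have "\<alpha> * t \<le> t" by (simp add: algebra_simps)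
    with True show ?thesis by (simp add: leaky_relu_def kink_def)
  next
    case False
    with assms have "(1 - \<alpha>) * t \<le> 0" by (simp add: mult_nonneg_nonpos)
    then have "t \<le> \<alpha> * t" by (simp add: algebra_simps)
    with False show ?thesis by (simp add: leaky_relu_def kink_def)
  qed
qed

lemma kink_nonpos: "t \<le> 0 \<Longrightarrow> kink k t = k * t"
  by (auto simp: kink_def)

lemma kink_kink: "0 < k' \<Longrightarrow> kink k (kink k' t) = kink (k * k') t"
  by (simp add: kink_def zero_le_mult_iff)

lemma kink_inverse: "0 < \<alpha> \<Longrightarrow> kink (inverse \<alpha>) t = - inverse \<alpha> * kink \<alpha> (- t)"
  by (auto simp: kink_def)

lemma mono_kink: "0 \<le> k \<Longrightarrow> mono (kink k)"
  by (auto simp: kink_def mono_def intro: mult_left_mono order.trans[OF mult_nonneg_nonpos])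

lemma net_realizable_kink_power:
  assumes "0 < \<alpha>" "\<alpha> \<le> 1"
  shows "net_realizable \<alpha> (kink (\<alpha> powi d))"
proof (induction d rule: int_induct[where k = 0])
  case base
  show ?case using net_realizable.affine[of \<alpha> 1 0] by simp
next
  case (step1 i)
  have "kink (\<alpha> powi (i + 1)) = (\<lambda>t. 1 * leaky_relu \<alpha> (kink (\<alpha> powi i) t) + 0)"
    using assms by (simp add: fun_eq_iff leaky_relu_eq_kink kink_kink power_int_add_1')
  then show ?case
    using net_realizable.layer[OF step1(2), of 1 0] by simp
next
  case (step2 i)
  have "\<alpha> powi (i - 1) = inverse \<alpha> * \<alpha> powi i"
    using assms power_int_minus_mult[of \<alpha> i] by (simp add: field_simps)
  then have "kink (\<alpha> powi (i - 1))
      = (\<lambda>t. - inverse \<alpha> * leaky_relu \<alpha> ((- 1) * kink (\<alpha> powi i) t + 0) + 0)"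
    using assms by (simp add: fun_eq_iff leaky_relu_eq_kink kink_inverse flip: kink_kink)
  then show ?case
    using net_realizable.layer[OF net_realizable_affine_comp[OF step2(2), of "- 1" 0],
        of "- inverse \<alpha>" 0]
    by simp
qed

lemma kink_glue:
  assumes "mono h" "0 \<le> m" "\<And>x. x \<le> p \<Longrightarrow> h x = h p + m * (x - p)"
  shows "kink k (h x - h p) + h p = (if x \<le> p then h p + k * m * (x - p) else h x)"
proof (cases "x \<le> p")
  case True
  then have "h x - h p = m * (x - p)" by (simp add: assms(3)[OF True])
  moreover from True assms(2) have "m * (x - p) \<le> 0" by (simp add: mult_nonneg_nonpos)
  ultimately show ?thesis using True by (simp add: kink_nonpos)
next
  case False
  with \<open>mono h\<close> have "0 \<le> h x - h p" by (simp add: monoD)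
  with False show ?thesis by (simp add: kink_def)
qed

lemma pl_withD:
  "pl_with g xs ms bs \<Longrightarrow> i \<le> length xs \<Longrightarrow> x \<in> piece xs i \<Longrightarrow> g x = ms ! i * x + bs ! i"
  unfolding pl_with_def by blast

lemma pl_with_uminus:
  "pl_with g xs ms bs \<Longrightarrow> pl_with (\<lambda>x. - g x) xs (map uminus ms) (map uminus bs)"
  unfolding pl_with_def by auto

lemma piece_Cons_0: "piece (p # xs) 0 = {..p}"
  by (simp add: piece_def)

lemma piece_Cons_1: "piece (p # xs) (Suc 0) = {p..} \<inter> piece xs 0"
  by (auto simp: piece_def)

lemma piece_Cons_Suc: "1 \<le> i \<Longrightarrow> i \<le> length xs \<Longrightarrow> piece (p # xs) (Suc i) = piece xs i"
  by (auto simp: piece_def nth_Cons split: nat.splits)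

lemma piece_Suc_lower: "j < length xs \<Longrightarrow> x \<in> piece xs (Suc j) \<Longrightarrow> xs ! j \<le> x"
  by (cases "length xs = Suc j") (auto simp: piece_def split: if_splits)

lemma breakpoint_in_piece_Cons_1: "sorted_wrt (<) (p # xs) \<Longrightarrow> p \<in> piece (p # xs) (Suc 0)"
  by (cases xs) (auto simp: piece_def)

lemma pl_with_drop_breakpoint:
  assumes "pl_with g (p # xs) (m0 # m1 # ms) (b0 # b1 # bs)"
  shows "pl_with (\<lambda>x. if x \<le> p then m1 * x + b1 else g x) xs (m1 # ms) (b1 # bs)"
  unfolding pl_with_def
proof (intro conjI allI impI ballI)
  from assms show "sorted_wrt (<) xs" "length (m1 # ms) = length xs + 1"
    "length (b1 # bs) = length xs + 1"
    unfolding pl_with_def by auto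
next
  fix i x assume i: "i \<le> length xs" and x: "x \<in> piece xs i"
  show "(if x \<le> p then m1 * x + b1 else g x) = (m1 # ms) ! i * x + (b1 # bs) ! i"
  proof (cases i)
    case 0
    with x have "\<not> x \<le> p \<Longrightarrow> x \<in> piece (p # xs) (Suc 0)" by (simp add: piece_Cons_1)
    with 0 show ?thesis using pl_withD[OF assms, of 1 x] by auto
  next
    case (Suc j)
    from assms i Suc have "p < xs ! j" unfolding pl_with_def by simp
    also from i x Suc have "xs ! j \<le> x" by (simp add: piece_Suc_lower)
    finally have "\<not> x \<le> p" by simp
    moreover from i x Suc have "x \<in> piece (p # xs) (Suc i)" by (simp add: piece_Cons_Suc)
    ultimately show ?thesis using pl_withD[OF assms, of "Suc i" x] i Suc by simp
  qed
qed

lemma power_slopes_net_realizable_mono: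
  assumes "0 < \<alpha>" "\<alpha> \<le> 1" "0 \<le> c"
  shows "pl_with g xs ms bs \<Longrightarrow> \<forall>m \<in> set ms. \<exists>k::int. m = c * \<alpha> powi k
    \<Longrightarrow> net_realizable \<alpha> g \<and> mono g"
proof (induction xs arbitrary: g ms bs)
  case Nil
  then obtain m b where mb: "ms = [m]" "bs = [b]"
    unfolding pl_with_def by (auto simp: length_Suc_conv)
  with Nil.prems(1) have "g = (\<lambda>x. m * x + b)"
    by (auto simp: fun_eq_iff piece_def dest: pl_withD)
  moreover from Nil.prems(2) mb assms have "0 \<le> m" by auto
  ultimately show ?case
    by (simp add: net_realizable.affine mono_def mult_left_mono)
next
  case (Cons p xs)
  from Cons.prems(1) obtain m0 m1 ms' b0 b1 bs' where
    ms: "ms = m0 # m1 # ms'" and bs: "bs = b0 # b1 # bs'"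
    unfolding pl_with_def by (auto simp: length_Suc_conv)
  note pl = Cons.prems(1)[unfolded ms bs]
  from Cons.prems(2) ms obtain k0 k1
    where k0: "m0 = c * \<alpha> powi k0" and k1: "m1 = c * \<alpha> powi k1"
    by auto
  define h where "h = (\<lambda>x. if x \<le> p then m1 * x + b1 else g x)"
  have h: "net_realizable \<alpha> h" "mono h"
    using Cons.IH[OF pl_with_drop_breakpoint[OF pl]] Cons.prems(2) ms
    unfolding h_def by auto
  have "sorted_wrt (<) (p # xs)" using pl unfolding pl_with_def by simp
  then have gp: "g p = m1 * p + b1"
    using pl_withD[OF pl, of 1 p] breakpoint_in_piece_Cons_1 by simp
  have g_left: "g x = m0 * x + b0" if "x \<le> p" for x
    using pl_withD[OF pl, of 0 x] that by (simp add: piece_Cons_0)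
  have h_left: "h x = h p + m1 * (x - p)" if "x \<le> p" for x
    using that by (simp add: h_def algebra_simps)
  define d where "d = k0 - k1"
  have m0: "m0 = \<alpha> powi d * m1"
    using assms(1) by (simp add: k0 k1 d_def power_int_diff)
  have "0 \<le> m1" using k1 assms by simp
  have hp: "h p = g p" by (simp add: h_def gp)
  have g_eq: "g = (\<lambda>x. kink (\<alpha> powi d) (h x - h p) + h p)"
  proof
    fix x
    have "kink (\<alpha> powi d) (h x - h p) + h p
        = (if x \<le> p then h p + \<alpha> powi d * m1 * (x - p) else h x)"
      by (rule kink_glue[OF h(2) \<open>0 \<le> m1\<close> h_left])
    also have "\<dots> = g x"
    proof (cases "x \<le> p")
      case True
      then show ?thesis
        using g_left[of p] g_left[OF True] by (simp add: hp m0 algebra_simps)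
    qed (simp add: h_def)
    finally show "g x = kink (\<alpha> powi d) (h x - h p) + h p" ..
  qed
  have "net_realizable \<alpha> (\<lambda>x. 1 * h x + - h p)"
    by (rule net_realizable_affine_comp[OF h(1)])
  then have "net_realizable \<alpha> (\<lambda>x. kink (\<alpha> powi d) (1 * h x + - h p))"
    by (rule net_realizable_comp[OF net_realizable_kink_power[OF assms(1,2)]])
  then have "net_realizable \<alpha> (\<lambda>x. 1 * kink (\<alpha> powi d) (1 * h x + - h p) + h p)"
    by (rule net_realizable_affine_comp)
  then have "net_realizable \<alpha> g"
    unfolding g_eq by simp
  moreover have "mono g"
  proof (rule monoI)
    fix u v :: real
    assume "u \<le> v"
    with h(2) have "h u - h p \<le> h v - h p" by (simp add: monoD)
    with mono_kink[of "\<alpha> powi d"] assms(1)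
    have "kink (\<alpha> powi d) (h u - h p) \<le> kink (\<alpha> powi d) (h v - h p)"
      by (simp add: monoD)
    then show "g u \<le> g v" by (simp add: g_eq)
  qed
  ultimately show ?case ..
qed

lemma alpha_power_pl_net_realizable:
  assumes "0 < \<alpha>" "\<alpha> \<le> 1" "alpha_power_pl \<alpha> g"
  shows "net_realizable \<alpha> g"
proof -
  from assms(3) obtain xs ms bs c where pl: "pl_with g xs ms bs"
    and slopes: "\<forall>m \<in> set ms. \<exists>k::int. m = c * \<alpha> powi k"
    unfolding alpha_power_pl_def by blast
  show ?thesis
  proof (cases "0 \<le> c")
    case True
    from power_slopes_net_realizable_mono[OF assms(1,2) True pl slopes] show ?thesis ..
  next
    case False
    have "\<forall>m \<in> set (map uminus ms). \<exists>k::int. m = - c * \<alpha> powi k"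
      using slopes by fastforce
    with power_slopes_net_realizable_mono[OF assms(1,2) _ pl_with_uminus[OF pl], of "- c"] False
    have "net_realizable \<alpha> (\<lambda>x. - g x)" by linarith
    from net_realizable_affine_comp[OF this, of "- 1" 0] show ?thesis by simp
  qed
qed

theorem mainTheorem4:
  fixes \<alpha> :: real and g :: "real \<Rightarrow> real"
  assumes "0 < \<alpha>" "\<alpha> < 1"
    and "alpha_power_pl \<alpha> g"
  shows "\<exists>L. \<exists>f \<in> N1 \<alpha> L. \<forall>x. g x = f x"
proof -
  from assms have "net_realizable \<alpha> g"
    by (intro alpha_power_pl_net_realizable) auto
  then obtain ps where "ps \<noteq> []" "g = net \<alpha> ps"
    using net_realizable_imp_net by blast
  then show ?thesis using net_in_N1 by blast
qed

end
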